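(* Let $n>11$ and suppose $\mathcal{C}\subseteq S_n$ is a perfect single-error-correcting code with respect to the Kendall's $\tau$-distance. Let $r$ be a positive integer with $r<\frac{n}{4}$. Then for every sequence $i_1,i_2,\dots,i_r$ of $r$ distinct elements of $[n]$ and every choice of positions $1\leq j_1<j_2<\dots<j_r\leq n$, the number of codewords $\sigma\in\mathcal{C}$ satisfying $\sigma(j_\ell)=i_\ell$ for all $1\leq \ell\leq r$ is exactly $\frac{(n-r)!}{n}$.
   Context: $S_n$ denotes the set of all permutations of $[n]=\{1,\dots,n\}$, written $\sigma=[\sigma(1),\dots,\sigma(n)]$, where $\sigma(i)$ is the element in position $i$. An adjacent transposition applied to $\sigma$ exchanges the entries in positions $i$ and $i+1$ for some $1\leq i\leq n-1$. The Kendall's $\tau$-distance $d_K(\sigma,\pi)$ is the minimum number of adjacent transpositions needed to transform $\sigma$ into $\pi$. A perfect single-error-correcting code is a subset $\mathcal{C}\subseteq S_n$ such that every permutation of $S_n$ is at distance at most $1$ from exactly one element of $\mathcal{C}$. *)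

theory Defs
  imports "HOL-Combinatorics.Combinatorics"
begin

text \<open>S_n: permutations of {1..n}, as functions nat => nat; sigma i is the entry in position i.\<close>
definition Sn :: "nat \<Rightarrow> (nat \<Rightarrow> nat) set" where
  "Sn n = {\<sigma>. \<sigma> permutes {1..n}}"

definition adj_swap :: "nat \<Rightarrow> (nat \<Rightarrow> nat) \<Rightarrow> (nat \<Rightarrow> nat)" where
  "adj_swap i \<sigma> = \<sigma> \<circ> Transposition.transpose i (Suc i)"

fun reach :: "nat \<Rightarrow> nat \<Rightarrow> (nat \<Rightarrow> nat) \<Rightarrow> (nat \<Rightarrow> nat) \<Rightarrow> bool" where
  "reach n 0 \<sigma> \<pi> = (\<sigma> = \<pi>)"
| "reach n (Suc k) \<sigma> \<pi> = (\<exists>i. 1 \<le> i \<and> i \<le> n - 1 \<and> reach n k (adj_swap i \<sigma>) \<pi>)"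

definition kendall :: "nat \<Rightarrow> (nat \<Rightarrow> nat) \<Rightarrow> (nat \<Rightarrow> nat) \<Rightarrow> nat" where
  "kendall n \<sigma> \<pi> = (LEAST k. reach n k \<sigma> \<pi>)"

definition perfect_1code :: "nat \<Rightarrow> (nat \<Rightarrow> nat) set \<Rightarrow> bool" where
  "perfect_1code n C \<longleftrightarrow> C \<subseteq> Sn n \<and>
     (\<forall>\<pi>\<in>Sn n. \<exists>!c. c \<in> C \<and> kendall n \<pi> c \<le> 1)"

end

theory Submission
  imports Defs
begin

text \<open>
  The closed unit ball around \<pi> consists of the n permutations \<pi> \<circ> \<tau>, where \<tau> is the identity
  or one of the n - 1 adjacent transpositions. Fix the values v at positions R and let x(q) be the
  number of codewords \<sigma> with \<sigma>(q l) = v l for l \<in> R, minus (n - |R|)!/n. Since the balls around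
  the codewords tile S_n, the n values x(\<tau> \<circ> q) add up to 0 for every injective position map q.
  An adjacent transposition changes q on R only if it touches one of the |R| positions q ` R, so at
  most 2|R| < n/2 of these values differ from x(q). For q with |x(q)| maximal this forces x(q) = 0,
  hence x vanishes identically.
\<close>

text \<open>Index 0 stands for the identity, so that adj_perm k, k < n, lists the unit ball around id.\<close>

definition adj_perm :: "nat \<Rightarrow> nat \<Rightarrow> nat" where
  "adj_perm k = (if k = 0 then id else Transposition.transpose k (Suc k))"

lemma adj_perm_apply_other: "y \<noteq> k \<Longrightarrow> y \<noteq> Suc k \<Longrightarrow> adj_perm k y = y"
  by (simp add: adj_perm_def)

lemma adj_perm_permutes: "k < n \<Longrightarrow> adj_perm k permutes {1..n}"
  by (auto simp: adj_perm_def permutes_id intro: permutes_swap_id)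

lemma adj_perm_inject: "adj_perm k = adj_perm k' \<longleftrightarrow> k = k'"
proof
  assume eq: "adj_perm k = adj_perm k'"
  show "k = k'"
  proof (rule ccontr)
    assume "k \<noteq> k'"
    then show False
      using fun_cong[OF eq, of k] fun_cong[OF eq, of k']
      by (auto simp: adj_perm_def transpose_def split: if_splits)
  qed
qed simp

lemma reach_add: "reach n a \<sigma> \<pi> \<Longrightarrow> reach n b \<pi> \<rho> \<Longrightarrow> reach n (a + b) \<sigma> \<rho>"
  by (induction a arbitrary: \<sigma>) auto

lemma reach_Suc_0_iff:
  "reach n (Suc 0) \<sigma> \<pi> \<longleftrightarrow> (\<exists>k\<in>{1..n-1}. \<pi> = \<sigma> \<circ> Transposition.transpose k (Suc k))"
  by (auto simp: adj_swap_def)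

lemma reach_transpose_less:
  assumes "1 \<le> a" "a < b" "b \<le> n"
  shows "\<exists>m. reach n m \<sigma> (\<sigma> \<circ> Transposition.transpose a b)"
  using assms(2,3)
proof (induction b arbitrary: \<sigma> rule: less_induct)
  case (less b)
  show ?case
  proof (cases "b = Suc a")
    case True
    then have "reach n (Suc 0) \<sigma> (\<sigma> \<circ> Transposition.transpose a b)"
      using assms(1) less.prems unfolding reach_Suc_0_iff by auto
    then show ?thesis by blast
  next
    case False
    then obtain c where b: "b = Suc c" and "a < c" using less.prems by (cases b) auto
    let ?t = "Transposition.transpose c (Suc c)"
    have step: "reach n 1 \<tau> (\<tau> \<circ> ?t)" for \<tau>
      using \<open>a < c\<close> less.prems assms(1) b unfolding One_nat_def reach_Suc_0_iff by auto
    have "\<exists>m. reach n m (\<sigma> \<circ> ?t) (\<sigma> \<circ> ?t \<circ> Transposition.transpose a c)"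
      by (rule less.IH) (use \<open>a < c\<close> less.prems b in auto)
    then obtain m where "reach n m (\<sigma> \<circ> ?t) (\<sigma> \<circ> ?t \<circ> Transposition.transpose a c)" ..
    with step have "reach n (1 + m + 1) \<sigma> (\<sigma> \<circ> ?t \<circ> Transposition.transpose a c \<circ> ?t)"
      by (blast intro: reach_add)
    moreover have "?t \<circ> Transposition.transpose a c \<circ> ?t = Transposition.transpose a b"
      using \<open>a < c\<close> b by (auto simp: fun_eq_iff transpose_def)
    ultimately show ?thesis by (metis comp_assoc)
  qed
qed

lemma reach_transpose:
  assumes "a \<in> {1..n}" "b \<in> {1..n}"
  shows "\<exists>m. reach n m \<sigma> (\<sigma> \<circ> Transposition.transpose a b)"
proof -
  consider "a = b" | "a < b" | "b < a" by linarith
  then show ?thesis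
  proof cases
    case 1
    then have "reach n 0 \<sigma> (\<sigma> \<circ> Transposition.transpose a b)" by simp
    then show ?thesis by blast
  next
    case 2
    then show ?thesis using assms reach_transpose_less by auto
  next
    case 3
    then show ?thesis using assms reach_transpose_less[of b a] by (auto simp: transpose_commute)
  qed
qed

lemma reach_permutes:
  assumes "p permutes {1..n}"
  shows "\<exists>m. reach n m \<sigma> (\<sigma> \<circ> p)"
  using assms finite_atLeastAtMost[of 1 n]
proof (induction p arbitrary: \<sigma> rule: permutes_induct)
  case id
  have "reach n 0 \<sigma> (\<sigma> \<circ> id)" by simp
  then show ?case by blast
next
  case (swap a b p)
  obtain m1 where "reach n m1 \<sigma> (\<sigma> \<circ> Transposition.transpose a b)"
    using reach_transpose swap.hyps(1,2) by blast
  moreover obtain m2 where "reach n m2 (\<sigma> \<circ> Transposition.transpose a b) (\<sigma> \<circ> Transposition.transpose a b \<circ> p)"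
    using swap.IH by blast
  ultimately show ?case by (metis comp_assoc reach_add)
qed

lemma reach_Sn:
  assumes "\<sigma> \<in> Sn n" "\<pi> \<in> Sn n"
  shows "\<exists>m. reach n m \<sigma> \<pi>"
proof -
  have "inv \<sigma> \<circ> \<pi> permutes {1..n}"
    using assms by (auto simp: Sn_def intro: permutes_compose permutes_inv)
  moreover have "\<sigma> \<circ> (inv \<sigma> \<circ> \<pi>) = \<pi>"
    using assms permutes_inv_o(1)[of \<sigma> "{1..n}"] by (simp add: Sn_def o_assoc)
  ultimately show ?thesis by (metis reach_permutes)
qed

lemma comp_transpose_eq_iff:
  "c = \<sigma> \<circ> Transposition.transpose a b \<longleftrightarrow> \<sigma> = c \<circ> Transposition.transpose a b"
  by (auto simp: comp_assoc)

lemma reach_Suc_0_iff_adj_perm: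
  assumes "n > 0"
  shows "reach n (Suc 0) \<sigma> c \<longleftrightarrow> (\<exists>k. 0 < k \<and> k < n \<and> \<sigma> = c \<circ> adj_perm k)"
proof -
  have "k \<in> {1..n-1} \<longleftrightarrow> 0 < k \<and> k < n" for k
    using assms by auto
  moreover have "0 < k \<Longrightarrow> adj_perm k = Transposition.transpose k (Suc k)" for k
    by (simp add: adj_perm_def)
  ultimately show ?thesis
    unfolding reach_Suc_0_iff comp_transpose_eq_iff by (metis (no_types, lifting))
qed

lemma kendall_le_1_iff:
  assumes "n > 0" "\<sigma> \<in> Sn n" "c \<in> Sn n"
  shows "kendall n \<sigma> c \<le> 1 \<longleftrightarrow> (\<exists>k<n. \<sigma> = c \<circ> adj_perm k)"
proof -
  have reach_kendall: "reach n (kendall n \<sigma> c) \<sigma> c"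
    unfolding kendall_def by (rule LeastI_ex[OF reach_Sn[OF assms(2,3)]])
  have "kendall n \<sigma> c \<le> 1 \<longleftrightarrow> \<sigma> = c \<or> reach n (Suc 0) \<sigma> c"
  proof
    assume "kendall n \<sigma> c \<le> 1"
    then have "kendall n \<sigma> c = 0 \<or> kendall n \<sigma> c = Suc 0" by linarith
    then show "\<sigma> = c \<or> reach n (Suc 0) \<sigma> c"
      using reach_kendall by (metis reach.simps(1))
  next
    assume "\<sigma> = c \<or> reach n (Suc 0) \<sigma> c"
    then have "reach n 0 \<sigma> c \<or> reach n (Suc 0) \<sigma> c" by simp
    then show "kendall n \<sigma> c \<le> 1"
      unfolding kendall_def by (metis Least_le One_nat_def le_SucI)
  qed
  also have "\<dots> \<longleftrightarrow> \<sigma> = c \<circ> adj_perm 0 \<or> (\<exists>k. 0 < k \<and> k < n \<and> \<sigma> = c \<circ> adj_perm k)"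
    unfolding reach_Suc_0_iff_adj_perm[OF assms(1)] by (simp add: adj_perm_def)
  also have "\<dots> \<longleftrightarrow> (\<exists>k<n. \<sigma> = c \<circ> adj_perm k)"
    using assms(1) by (metis neq0_conv)
  finally show ?thesis .
qed

lemma permutes_extend_bij_betw:
  assumes "finite S" "J \<subseteq> S" "I \<subseteq> S" "bij_betw f J I"
  obtains \<rho> where "\<rho> permutes S" "\<forall>x\<in>J. \<rho> x = f x"
proof -
  have "card J = card I"
    using assms(4) by (rule bij_betw_same_card)
  then have "card (S - J) = card (S - I)"
    using assms(1-3) by (simp add: card_Diff_subset finite_subset)
  then obtain g where g: "bij_betw g (S - J) (S - I)"
    using assms(1) finite_same_card_bij by blast
  define \<rho> where "\<rho> x = (if x \<in> J then f x else if x \<in> S then g x else x)" for x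
  have "bij_betw \<rho> J I"
    using assms(4) by (rule bij_betw_cong[THEN iffD1, rotated]) (simp add: \<rho>_def)
  moreover have "bij_betw \<rho> (S - J) (S - I)"
    using g by (rule bij_betw_cong[THEN iffD1, rotated]) (simp add: \<rho>_def)
  ultimately have "bij_betw \<rho> (J \<union> (S - J)) (I \<union> (S - I))"
    by (rule bij_betw_combine) blast
  moreover have "J \<union> (S - J) = S" "I \<union> (S - I) = S"
    using assms(2,3) by auto
  ultimately have "\<rho> permutes S"
    by (intro bij_imp_permutes) (use assms(2) in \<open>auto simp: \<rho>_def\<close>)
  then show ?thesis
    by (rule that) (simp add: \<rho>_def)
qed

lemma card_permutes_agree_on:
  assumes "finite S" "\<rho> permutes S" "J \<subseteq> S"
  shows "card {\<pi>. \<pi> permutes S \<and> (\<forall>x\<in>J. \<pi> x = \<rho> x)} = fact (card S - card J)"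
proof -
  have "{\<pi>. \<pi> permutes S \<and> (\<forall>x\<in>J. \<pi> x = \<rho> x)} = (\<lambda>\<phi>. \<rho> \<circ> \<phi>) ` {\<phi>. \<phi> permutes (S - J)}"
  proof (intro equalityI subsetI)
    fix \<pi> assume \<pi>: "\<pi> \<in> {\<pi>. \<pi> permutes S \<and> (\<forall>x\<in>J. \<pi> x = \<rho> x)}"
    have "inv \<rho> \<circ> \<pi> permutes S"
      using \<pi> assms(2) by (auto intro: permutes_compose permutes_inv)
    moreover have "\<forall>x\<in>J. (inv \<rho> \<circ> \<pi>) x = x"
      using \<pi> permutes_inverses(2)[OF assms(2)] by auto
    ultimately have "inv \<rho> \<circ> \<pi> permutes (S - J)"
      unfolding permutes_def by blast
    moreover have "\<pi> = \<rho> \<circ> (inv \<rho> \<circ> \<pi>)"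
      using permutes_inv_o(1)[OF assms(2)] by (simp add: o_assoc)
    ultimately show "\<pi> \<in> (\<lambda>\<phi>. \<rho> \<circ> \<phi>) ` {\<phi>. \<phi> permutes (S - J)}"
      by blast
  next
    fix \<pi> assume "\<pi> \<in> (\<lambda>\<phi>. \<rho> \<circ> \<phi>) ` {\<phi>. \<phi> permutes (S - J)}"
    then obtain \<phi> where \<phi>: "\<phi> permutes (S - J)" "\<pi> = \<rho> \<circ> \<phi>" by blast
    have "\<rho> \<circ> \<phi> permutes S"
      using permutes_subset[OF \<phi>(1)] assms(2) by (blast intro: permutes_compose)
    moreover have "\<forall>x\<in>J. \<phi> x = x"
      using permutes_not_in[OF \<phi>(1)] by blast
    ultimately show "\<pi> \<in> {\<pi>. \<pi> permutes S \<and> (\<forall>x\<in>J. \<pi> x = \<rho> x)}"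
      using \<phi>(2) by simp
  qed
  moreover have "inj_on (\<lambda>\<phi>. \<rho> \<circ> \<phi>) {\<phi>. \<phi> permutes (S - J)}"
    using permutes_inj[OF assms(2)] by (auto intro!: inj_onI simp: fun_eq_iff inj_eq)
  ultimately show ?thesis
    using assms by (simp add: card_image card_permutations card_Diff_subset finite_subset)
qed

lemma card_permutes_prescribed_values:
  assumes "finite S" "inj_on p R" "p ` R \<subseteq> S" "inj_on v R" "v ` R \<subseteq> S"
  shows "card {\<pi>. \<pi> permutes S \<and> (\<forall>l\<in>R. \<pi> (p l) = v l)} = fact (card S - card R)"
proof -
  have "bij_betw (v \<circ> inv_into R p) (p ` R) (v ` R)"
    using assms(2,4) by (blast intro: bij_betw_trans bij_betw_inv_into inj_on_imp_bij_betw)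
  then obtain \<rho> where \<rho>: "\<rho> permutes S" "\<forall>x\<in>p ` R. \<rho> x = (v \<circ> inv_into R p) x"
    using permutes_extend_bij_betw assms(1,3,5) by blast
  then have "{\<pi>. \<pi> permutes S \<and> (\<forall>l\<in>R. \<pi> (p l) = v l)} = {\<pi>. \<pi> permutes S \<and> (\<forall>x\<in>p ` R. \<pi> x = \<rho> x)}"
    using assms(2) by auto
  also have "card \<dots> = fact (card S - card (p ` R))"
    by (rule card_permutes_agree_on[OF assms(1) \<rho>(1) assms(3)])
  finally show ?thesis
    using assms(2) by (simp add: card_image)
qed

lemma perfect_1code_tiling:
  assumes "n > 0" "perfect_1code n C" "A \<subseteq> Sn n"
  shows "(\<Sum>k<n. card {c\<in>C. c \<circ> adj_perm k \<in> A}) = card A"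
proof -
  have C: "C \<subseteq> Sn n" and unique: "\<And>\<pi>. \<pi> \<in> Sn n \<Longrightarrow> \<exists>!c. c \<in> C \<and> kendall n \<pi> c \<le> 1"
    using assms(2) by (auto simp: perfect_1code_def)
  have "finite C"
    using C finite_permutations[of "{1..n}"] finite_subset by (auto simp: Sn_def)
  have in_ball: "c \<circ> adj_perm k \<in> Sn n \<and> kendall n (c \<circ> adj_perm k) c \<le> 1" if "c \<in> C" "k < n" for c k
  proof -
    have "c \<circ> adj_perm k \<in> Sn n"
      using that C adj_perm_permutes[of k n] by (auto simp: Sn_def intro: permutes_compose)
    moreover have "c \<in> Sn n"
      using that(1) C by blast
    ultimately show ?thesis
      using kendall_le_1_iff[OF assms(1), of "c \<circ> adj_perm k" c] that(2) by blast
  qed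
  let ?\<Sigma> = "SIGMA k:{..<n}. {c\<in>C. c \<circ> adj_perm k \<in> A}"
  have "inj_on (\<lambda>(k, c). c \<circ> adj_perm k) ?\<Sigma>"
  proof (rule inj_onI)
    fix kc kc' assume kc: "kc \<in> ?\<Sigma>" and kc': "kc' \<in> ?\<Sigma>"
    obtain k c k' c' where [simp]: "kc = (k, c)" "kc' = (k', c')"
      by (cases kc, cases kc') auto
    assume "(\<lambda>(k, c). c \<circ> adj_perm k) kc = (\<lambda>(k, c). c \<circ> adj_perm k) kc'"
    then have eq: "c \<circ> adj_perm k = c' \<circ> adj_perm k'" by simp
    have mem: "k < n" "c \<in> C" "k' < n" "c' \<in> C"
      using kc kc' by auto
    have "c \<circ> adj_perm k \<in> Sn n" "kendall n (c \<circ> adj_perm k) c \<le> 1"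
      "kendall n (c \<circ> adj_perm k) c' \<le> 1"
      using in_ball[OF mem(2,1)] in_ball[OF mem(4,3)] unfolding eq by auto
    then have "c = c'"
      using unique mem(2,4) by blast
    moreover have "inj c'"
      using mem(4) C by (auto simp: Sn_def permutes_inj)
    ultimately have "adj_perm k = adj_perm k'"
      using eq by (simp add: fun_eq_iff inj_eq)
    then show "kc = kc'"
      using \<open>c = c'\<close> by (simp add: adj_perm_inject)
  qed
  moreover have "(\<lambda>(k, c). c \<circ> adj_perm k) ` ?\<Sigma> = A"
  proof (intro equalityI subsetI)
    fix \<pi> assume "\<pi> \<in> A"
    then have "\<pi> \<in> Sn n" using assms(3) by blast
    then obtain c where "c \<in> C" "kendall n \<pi> c \<le> 1"
      using unique by blast
    then obtain k where "k < n" "\<pi> = c \<circ> adj_perm k"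
      using kendall_le_1_iff[OF assms(1) \<open>\<pi> \<in> Sn n\<close>] C by blast
    then show "\<pi> \<in> (\<lambda>(k, c). c \<circ> adj_perm k) ` ?\<Sigma>"
      using \<open>c \<in> C\<close> \<open>\<pi> \<in> A\<close> by (intro image_eqI[of _ _ "(k, c)"]) auto
  qed force
  ultimately have "card A = card ?\<Sigma>"
    using card_image by fastforce
  also have "\<dots> = (\<Sum>k<n. card {c\<in>C. c \<circ> adj_perm k \<in> A})"
    using \<open>finite C\<close> by simp
  finally show ?thesis by simp
qed

lemma vanishing_by_maximum_principle:
  fixes x :: "'a \<Rightarrow> real"
  assumes "finite (x ` P)"
    and "\<And>q k. q \<in> P \<Longrightarrow> k < n \<Longrightarrow> g k q \<in> P"
    and "\<And>q. q \<in> P \<Longrightarrow> (\<Sum>k<n. x (g k q)) = 0"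
    and "\<And>q. q \<in> P \<Longrightarrow> \<exists>K\<subseteq>{..<n}. 2 * card K < n \<and> (\<forall>k\<in>{..<n} - K. x (g k q) = x q)"
    and "q \<in> P"
  shows "x q = 0"
proof -
  have fin: "finite (abs ` x ` P)"
    using assms(1) by blast
  have "Max (abs ` x ` P) \<in> abs ` x ` P"
    using fin assms(5) by (intro Max_in) auto
  then obtain q0 where "q0 \<in> P" and q0: "Max (abs ` x ` P) = \<bar>x q0\<bar>"
    by blast
  have max: "\<bar>x q\<bar> \<le> \<bar>x q0\<bar>" if "q \<in> P" for q
    unfolding q0[symmetric] using fin that by (intro Max_ge) auto
  obtain K where K: "K \<subseteq> {..<n}" "2 * card K < n" "\<forall>k\<in>{..<n} - K. x (g k q0) = x q0"
    using assms(4)[OF \<open>q0 \<in> P\<close>] by blast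
  have "finite K"
    using K(1) finite_subset by blast
  have "0 = (\<Sum>k\<in>{..<n} - K. x (g k q0)) + (\<Sum>k\<in>K. x (g k q0))"
    using assms(3)[OF \<open>q0 \<in> P\<close>] sum.subset_diff[OF K(1) finite_lessThan, of "\<lambda>k. x (g k q0)"] by simp
  also have "(\<Sum>k\<in>{..<n} - K. x (g k q0)) = real (n - card K) * x q0"
    using K(1,3) \<open>finite K\<close> by (simp add: card_Diff_subset)
  finally have "real (n - card K) * x q0 = - (\<Sum>k\<in>K. x (g k q0))"
    by linarith
  then have "real (n - card K) * \<bar>x q0\<bar> = \<bar>\<Sum>k\<in>K. x (g k q0)\<bar>"
    by (metis abs_minus_cancel abs_mult abs_of_nat)
  also have "\<dots> \<le> (\<Sum>k\<in>K. \<bar>x (g k q0)\<bar>)"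
    by (rule sum_abs)
  also have "\<dots> \<le> (\<Sum>k\<in>K. \<bar>x q0\<bar>)"
    using K(1) by (intro sum_mono max assms(2) \<open>q0 \<in> P\<close>) auto
  finally have "real (n - card K) * \<bar>x q0\<bar> \<le> real (card K) * \<bar>x q0\<bar>"
    by simp
  then have "\<bar>x q0\<bar> = 0"
    using K(2) by (simp add: of_nat_diff mult_le_cancel_right)
  then show ?thesis
    using max[OF assms(5)] by simp
qed

lemma perfect_1code_pattern_sum:
  assumes "n > 0" "perfect_1code n C"
    and "inj_on q R" "q ` R \<subseteq> {1..n}" "inj_on v R" "v ` R \<subseteq> {1..n}"
  shows "(\<Sum>k<n. card {c\<in>C. \<forall>l\<in>R. c (adj_perm k (q l)) = v l}) = fact (n - card R)"
proof -
  let ?A = "{\<pi>. \<pi> permutes {1..n} \<and> (\<forall>l\<in>R. \<pi> (q l) = v l)}"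
  have "{c\<in>C. c \<circ> adj_perm k \<in> ?A} = {c\<in>C. \<forall>l\<in>R. c (adj_perm k (q l)) = v l}" if "k < n" for k
    using assms(2) adj_perm_permutes[OF that]
    by (auto simp: perfect_1code_def Sn_def intro: permutes_compose)
  then have "(\<Sum>k<n. card {c\<in>C. \<forall>l\<in>R. c (adj_perm k (q l)) = v l})
      = (\<Sum>k<n. card {c\<in>C. c \<circ> adj_perm k \<in> ?A})"
    by (intro sum.cong) auto
  also have "\<dots> = card ?A"
    by (rule perfect_1code_tiling[OF assms(1,2)]) (auto simp: Sn_def)
  also have "\<dots> = fact (n - card R)"
    using card_permutes_prescribed_values[OF _ assms(3-6)] by simp
  finally show ?thesis .
qed

lemma card_adjacent_le:
  assumes "finite Q"
  shows "card (A \<inter> {k. k \<in> Q \<or> Suc k \<in> Q}) \<le> 2 * card Q"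
proof -
  have "A \<inter> {k. k \<in> Q \<or> Suc k \<in> Q} \<subseteq> Q \<union> (\<lambda>y. y - 1) ` Q"
    by (auto intro: image_eqI[where x = "Suc _"])
  then have "card (A \<inter> {k. k \<in> Q \<or> Suc k \<in> Q}) \<le> card (Q \<union> (\<lambda>y. y - 1) ` Q)"
    using assms by (intro card_mono) auto
  also have "\<dots> \<le> card Q + card ((\<lambda>y. y - 1) ` Q)"
    by (rule card_Un_le)
  also have "\<dots> \<le> 2 * card Q"
    using card_image_le[OF assms, of "\<lambda>y. y - 1"] by simp
  finally show ?thesis .
qed

lemma perfect_1code_pattern_count:
  assumes "perfect_1code n C" "finite R" "4 * card R < n"
    and "inj_on p R" "p ` R \<subseteq> {1..n}" "inj_on v R" "v ` R \<subseteq> {1..n}"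
  shows "real (card {\<sigma>\<in>C. \<forall>l\<in>R. \<sigma> (p l) = v l}) = fact (n - card R) / real n"
proof -
  have "n > 0" using assms(3) by simp
  define P where "P = {q. inj_on q R \<and> q ` R \<subseteq> {1..n}}"
  define x where "x q = real (card {\<sigma>\<in>C. \<forall>l\<in>R. \<sigma> (q l) = v l}) - fact (n - card R) / real n" for q
  have "finite C"
    using assms(1) finite_permutations[of "{1..n}"] finite_subset
    by (auto simp: perfect_1code_def Sn_def)
  then have "x ` P \<subseteq> (\<lambda>m. real m - fact (n - card R) / real n) ` {..card C}"
    unfolding x_def by (auto intro: card_mono)
  then have "finite (x ` P)"
    by (rule finite_subset) simp
  moreover have "adj_perm k \<circ> q \<in> P" if "q \<in> P" "k < n" for q k
    using that permutes_inj[OF adj_perm_permutes[OF that(2)]]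
      permutes_in_image[OF adj_perm_permutes[OF that(2)]]
    by (auto simp: P_def intro: comp_inj_on inj_on_subset)
  moreover have "(\<Sum>k<n. x (adj_perm k \<circ> q)) = 0" if "q \<in> P" for q
    using perfect_1code_pattern_sum[OF \<open>n > 0\<close> assms(1), of q R v] assms(6,7) that \<open>n > 0\<close>
    by (simp add: x_def P_def sum_subtractf flip: of_nat_sum)
  moreover have "\<exists>K\<subseteq>{..<n}. 2 * card K < n \<and> (\<forall>k\<in>{..<n} - K. x (adj_perm k \<circ> q) = x q)"
    if "q \<in> P" for q
  proof (intro exI conjI)
    let ?K = "{..<n} \<inter> {k. k \<in> q ` R \<or> Suc k \<in> q ` R}"
    show "2 * card ?K < n"
      using card_adjacent_le[of "q ` R" "{..<n}"] card_image_le[OF assms(2), of q] assms(2,3)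
      by simp
    have "adj_perm k (q l) = q l" if "k \<in> {..<n} - ?K" "l \<in> R" for k l
      using that by (intro adj_perm_apply_other) (auto, metis imageI)
    then show "\<forall>k\<in>{..<n} - ?K. x (adj_perm k \<circ> q) = x q"
      by (simp add: x_def)
  qed auto
  moreover have "p \<in> P"
    using assms(4,5) by (simp add: P_def)
  ultimately have "x p = 0"
    by (rule vanishing_by_maximum_principle[where g = "\<lambda>k q. adj_perm k \<circ> q"])
  then show ?thesis
    by (simp add: x_def)
qed

theorem theorem3:
  fixes n r :: nat and C :: "(nat \<Rightarrow> nat) set" and i j :: "nat \<Rightarrow> nat"
  assumes "n > 11"
    and "perfect_1code n C"
    and "r > 0" and "real r < real n / 4"
    and "\<forall>l\<in>{1..r}. i l \<in> {1..n}" and "inj_on i {1..r}"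
    and "\<forall>l\<in>{1..r}. j l \<in> {1..n}" and "strict_mono_on {1..r} j"
  shows "real (card {\<sigma>\<in>C. \<forall>l\<in>{1..r}. \<sigma> (j l) = i l}) = fact (n - r) / real n"
proof -
  have "4 * card {1..r} < n"
    using assms(4) by simp
  moreover have "inj_on j {1..r}"
    using assms(8) by (rule strict_mono_on_imp_inj_on)
  moreover have "j ` {1..r} \<subseteq> {1..n}" "i ` {1..r} \<subseteq> {1..n}"
    using assms(5,7) by auto
  ultimately show ?thesis
    using perfect_1code_pattern_count[OF assms(2), where R = "{1..r}" and p = j and v = i] assms(6)
    by simp
qed

end
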